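(* Let $k$ be a positive integer, let $D$ be a digraph containing no subdivision of $B(k,1;k)$, let $\mathcal{C}$ be a $k$-suitable collection of directed cycles of $D$, and let $C_1\in\mathcal{C}$. Then (i) $I^+(C_1)$ and $I^-(C_1)$ are vertex-disjoint; and (ii) for every $C_j\in\mathcal{C}\cap C_1$, $V(I^-(C_1))\cap V(C_j)=V(Q^-_j)$ and $V(I^+(C_1))\cap V(C_j)=V(Q^+_j)$.
   Context: A collection $\mathcal{C}$ of directed cycles is $k$-suitable if every cycle of $\mathcal{C}$ has length at least $8k$ and for any two distinct $C_i,C_j\in\mathcal{C}$, the set $V(C_i)\cap V(C_j)$ is either empty or the vertex set of a directed path $P_{i,j}$ with at most $k$ vertices which is a subpath of both $C_i$ and $C_j$; $s_{i,j}$, $t_{i,j}$ denote the initial and terminal vertices of $P_{i,j}$. For a directed cycle $C$ and vertices $a,b$ on it, $C[a,b]$ is the directed subpath of $C$ from $a$ to $b$, and $C[a,b[$, $C]a,b]$ denote it with $b$, respectively $a$, removed. $\mathcal{C}\cap C_1$ denotes the set of cycles of $\mathcal{C}$ other than $C_1$ that share a vertex with $C_1$. For $C_j\in\mathcal{C}\cap C_1$, $Q_j$ is the subpath of $C_j$ consisting of all vertices at distance at most $3k$ from $P_{1,j}$ along the cycle, so that $C_j[s(Q_j),s_{1,j}]$ and $C_j[t_{1,j},t(Q_j)]$ both have length $3k$ ($s(Q_j),t(Q_j)$ being its initial and terminal vertices); $Q^-_j=C_j[s(Q_j),s_{1,j}[$ and $Q^+_j=C_j]t_{1,j},t(Q_j)]$.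 Finally $I^+(C_1)=\bigcup_{C_j\in\mathcal{C}\cap C_1}Q^+_j$, $I^-(C_1)=\bigcup_{C_j\in\mathcal{C}\cap C_1}Q^-_j$ and $I(C_1)=C_1\cup\bigcup_{C_j\in\mathcal{C}\cap C_1}Q_j$ (unions of digraphs). A digraph contains a subdivision of $B(k_1,k_2;k_3)$ if there exist distinct vertices $u,w$ and three pairwise internally vertex-disjoint directed paths: two from $u$ to $w$ of lengths at least $k_1$ and $k_2$, and one from $w$ to $u$ of length at least $k_3$. *)

theory Defs
  imports Main
begin

text \<open>A path p has length (number of arcs) length p - 1; a cycle c has length (number of arcs)
  length c, its arcs being (c!i, c!((i+1) mod length c)).\<close>

definition digraph :: "'a set \<Rightarrow> ('a \<times> 'a) set \<Rightarrow> bool" where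
  "digraph V A \<longleftrightarrow> finite V \<and> A \<subseteq> V \<times> V \<and> (\<forall>v. (v, v) \<notin> A)"

definition dpath :: "'a set \<Rightarrow> ('a \<times> 'a) set \<Rightarrow> 'a list \<Rightarrow> bool" where
  "dpath V A p \<longleftrightarrow> p \<noteq> [] \<and> distinct p \<and> set p \<subseteq> V \<and>
     (\<forall>i. Suc i < length p \<longrightarrow> (p ! i, p ! Suc i) \<in> A)"

definition dcycle :: "'a set \<Rightarrow> ('a \<times> 'a) set \<Rightarrow> 'a list \<Rightarrow> bool" where
  "dcycle V A c \<longleftrightarrow> c \<noteq> [] \<and> distinct c \<and> set c \<subseteq> V \<and>
     (\<forall>i < length c. (c ! i, c ! ((Suc i) mod length c)) \<in> A)"

definition interior :: "'a list \<Rightarrow> 'a set" where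
  "interior p = set (butlast (tl p))"

text \<open>D contains a subdivision of B(k1,k2;k3).  The two u-w paths are required to be
  distinct (they correspond to two distinct arcs of B).\<close>
definition has_B_subdivision :: "'a set \<Rightarrow> ('a \<times> 'a) set \<Rightarrow> nat \<Rightarrow> nat \<Rightarrow> nat \<Rightarrow> bool" where
  "has_B_subdivision V A k1 k2 k3 \<longleftrightarrow>
     (\<exists>u w P1 P2 P3. u \<noteq> w \<and>
        dpath V A P1 \<and> hd P1 = u \<and> last P1 = w \<and> length P1 - 1 \<ge> k1 \<and>
        dpath V A P2 \<and> hd P2 = u \<and> last P2 = w \<and> length P2 - 1 \<ge> k2 \<and>
        dpath V A P3 \<and> hd P3 = w \<and> last P3 = u \<and> length P3 - 1 \<ge> k3 \<and>
        P1 \<noteq> P2 \<and>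
        interior P1 \<inter> interior P2 = {} \<and> interior P1 \<inter> interior P3 = {} \<and>
        interior P2 \<inter> interior P3 = {})"

definition cyc_seg :: "'a list \<Rightarrow> nat \<Rightarrow> nat \<Rightarrow> 'a list" where
  "cyc_seg c a m = map (\<lambda>i. c ! ((a + i) mod length c)) [0..<m]"

definition cyc_subpath :: "'a list \<Rightarrow> 'a list \<Rightarrow> bool" where
  "cyc_subpath c P \<longleftrightarrow> P \<noteq> [] \<and> length P \<le> length c \<and> (\<exists>a. P = cyc_seg c a (length P))"

definition k_suitable :: "'a set \<Rightarrow> ('a \<times> 'a) set \<Rightarrow> nat \<Rightarrow> 'a list set \<Rightarrow> bool" where
  "k_suitable V A k \<C> \<longleftrightarrow>
     (\<forall>C \<in> \<C>. dcycle V A C \<and> length C \<ge> 8 * k) \<and>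
     (\<forall>Ci \<in> \<C>. \<forall>Cj \<in> \<C>. Ci \<noteq> Cj \<longrightarrow>
        set Ci \<inter> set Cj = {} \<or>
        (\<exists>P. cyc_subpath Ci P \<and> cyc_subpath Cj P \<and> length P \<le> k \<and>
             set P = set Ci \<inter> set Cj))"

definition common_path :: "'a list \<Rightarrow> 'a list \<Rightarrow> 'a list" where
  "common_path Ci Cj = (THE P. cyc_subpath Ci P \<and> cyc_subpath Cj P \<and> set P = set Ci \<inter> set Cj)"

definition pos :: "'a list \<Rightarrow> 'a \<Rightarrow> nat" where
  "pos c v = (THE i. i < length c \<and> c ! i = v)"

text \<open>Q^-_j = C_j[s(Q_j), s_{1,j}[ : the 3k vertices of C_j preceding s_{1,j};
  Q^+_j = C_j]t_{1,j}, t(Q_j)] : the 3k vertices of C_j following t_{1,j}.\<close>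
definition Qminus :: "nat \<Rightarrow> 'a list \<Rightarrow> 'a list \<Rightarrow> 'a list" where
  "Qminus k C1 Cj = cyc_seg Cj (pos Cj (hd (common_path C1 Cj)) + length Cj - 3 * k) (3 * k)"

definition Qplus :: "nat \<Rightarrow> 'a list \<Rightarrow> 'a list \<Rightarrow> 'a list" where
  "Qplus k C1 Cj = cyc_seg Cj (Suc (pos Cj (last (common_path C1 Cj)))) (3 * k)"

definition meets :: "'a list set \<Rightarrow> 'a list \<Rightarrow> 'a list set" where
  "meets \<C> C1 = {Cj \<in> \<C>. Cj \<noteq> C1 \<and> set Cj \<inter> set C1 \<noteq> {}}"

definition Iplus_verts :: "nat \<Rightarrow> 'a list set \<Rightarrow> 'a list \<Rightarrow> 'a set" where
  "Iplus_verts k \<C> C1 = (\<Union>Cj \<in> meets \<C> C1. set (Qplus k C1 Cj))"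

definition Iminus_verts :: "nat \<Rightarrow> 'a list set \<Rightarrow> 'a list \<Rightarrow> 'a set" where
  "Iminus_verts k \<C> C1 = (\<Union>Cj \<in> meets \<C> C1. set (Qminus k C1 Cj))"

end

theory Submission
  imports Defs
begin

text \<open>Suppose a vertex y of Q^-_l lies on another cycle C_j meeting C_1 but not on Q^-_j. As y is
  within distance 3k before s_{1,l} on C_l, while all intersections of the cycles are paths of at
  most k vertices and every cycle has length at least 8k, the arc of C_j from t = t_{j,l} to
  s = s_{1,j} followed by the arc of C_1 from s to b = s_{1,l} is a path of length at least k from t
  to b meeting C_l only in its ends, and the arc C_l[b,t] has length at least 5k. Together with
  C_l[t,b] these paths form a subdivision of B(k,1;k). Reversing all arcs turns Q^+ into Q^-, which
  gives the statement for Q^+. Part (i) follows from (ii): a vertex of Q^+_j in I^-(C_1) would lie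
  in Q^-_j, which is disjoint from Q^+_j.\<close>

lemma dpath_iff_successively:
  "dpath V A p \<longleftrightarrow> p \<noteq> [] \<and> distinct p \<and> set p \<subseteq> V \<and> successively (\<lambda>x y. (x, y) \<in> A) p"
  unfolding dpath_def successively_conv_nth by auto

lemma dcycle_iff_dpath: "dcycle V A c \<longleftrightarrow> dpath V A c \<and> (last c, hd c) \<in> A"
proof (cases c rule: rev_cases)
  case (snoc xs x)
  let ?m = "length xs"
  have "(\<forall>i < Suc ?m. (c ! i, c ! (Suc i mod Suc ?m)) \<in> A) \<longleftrightarrow>
        (\<forall>i < ?m. (c ! i, c ! Suc i) \<in> A) \<and> (last c, hd c) \<in> A"
    using snoc by (auto simp: All_less_Suc hd_conv_nth nth_append)
  then show ?thesis
    using snoc unfolding dcycle_def dpath_def by auto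
qed (simp add: dcycle_def dpath_def)

lemma dpath_rev: "dpath V (A\<inverse>) p \<Longrightarrow> dpath V A (rev p)"
  by (simp add: dpath_iff_successively)

lemma dcycle_rev: "dcycle V A c \<Longrightarrow> dcycle V (A\<inverse>) (rev c)"
  by (auto simp: dcycle_iff_dpath dpath_iff_successively hd_rev last_rev)

lemma interior_rev [simp]: "interior (rev p) = interior p"
proof -
  have "tl (rev p) = rev (butlast p)"
    using butlast_rev[of "rev p"] by simp
  then show ?thesis by (simp add: interior_def butlast_tl)
qed

lemma interior_eq_set_minus_ends:
  assumes "distinct p" "p \<noteq> []"
  shows "interior p = set p - {hd p, last p}"
proof (cases p)
  case (Cons x xs)
  then show ?thesis
    using assms by (cases xs rule: rev_cases) (auto simp: interior_def)
qed (use assms in simp)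

lemma has_B_subdivisionI:
  assumes "u \<noteq> w"
    and "dpath V A P" "hd P = u" "last P = w" "k1 \<le> length P - 1"
    and "dpath V A Q" "hd Q = u" "last Q = w" "k2 \<le> length Q - 1"
    and "dpath V A R" "hd R = w" "last R = u" "k3 \<le> length R - 1"
    and "P \<noteq> Q" "interior P \<inter> interior Q = {}" "interior P \<inter> interior R = {}"
    "interior Q \<inter> interior R = {}"
  shows "has_B_subdivision V A k1 k2 k3"
  unfolding has_B_subdivision_def using assms by blast

lemma has_B_subdivision_converse:
  assumes "has_B_subdivision V (A\<inverse>) k1 k2 k3"
  shows "has_B_subdivision V A k1 k2 k3"
proof -
  obtain u w P1 P2 P3 where B: "u \<noteq> w"
      "dpath V (A\<inverse>) P1" "hd P1 = u" "last P1 = w" "length P1 - 1 \<ge> k1"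
      "dpath V (A\<inverse>) P2" "hd P2 = u" "last P2 = w" "length P2 - 1 \<ge> k2"
      "dpath V (A\<inverse>) P3" "hd P3 = w" "last P3 = u" "length P3 - 1 \<ge> k3"
      "P1 \<noteq> P2" "interior P1 \<inter> interior P2 = {}" "interior P1 \<inter> interior P3 = {}"
      "interior P2 \<inter> interior P3 = {}"
    using assms unfolding has_B_subdivision_def by blast
  have rev: "dpath V A (rev P1)" "dpath V A (rev P2)" "dpath V A (rev P3)"
    using B dpath_rev by blast+
  have "P1 \<noteq> []" "P2 \<noteq> []" "P3 \<noteq> []"
    using B unfolding dpath_def by blast+
  show ?thesis
    by (rule has_B_subdivisionI[where P = "rev P1" and Q = "rev P2" and R = "rev P3"])
      (use B rev \<open>P1 \<noteq> []\<close> \<open>P2 \<noteq> []\<close> \<open>P3 \<noteq> []\<close> in \<open>simp_all add: hd_rev last_rev\<close>)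
qed

lemma
  assumes "p \<noteq> []" "q \<noteq> []" "last p = hd q"
  shows set_append_tl: "set (p @ tl q) = set p \<union> set q"
    and last_append_tl: "last (p @ tl q) = last q"
  using assms by (cases q; force simp: last_append)+

lemma dpath_append:
  assumes "dpath V A p" "dpath V A q" "last p = hd q" "set p \<inter> set q = {hd q}"
  shows "dpath V A (p @ tl q)"
proof -
  obtain x qs where q: "q = x # qs" and "p \<noteq> []"
    using assms(1,2) unfolding dpath_def by (cases q) auto
  then have "last p = x" "x \<in> set p" using assms(3) by auto
  moreover have "distinct (p @ qs)"
    using assms(1,2,4) q unfolding dpath_def by auto
  ultimately show ?thesis
    using assms(1,2) q \<open>p \<noteq> []\<close> unfolding dpath_iff_successively
    by (auto simp: successively_append_iff successively_Cons)
qed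

section \<open>Distance along a cycle\<close>

definition cyc_dist :: "'a list \<Rightarrow> 'a \<Rightarrow> 'a \<Rightarrow> nat" where
  "cyc_dist c u v = (pos c v + length c - pos c u) mod length c"

lemma pos_nth: "distinct c \<Longrightarrow> i < length c \<Longrightarrow> pos c (c ! i) = i"
  unfolding pos_def by (rule the_equality) (auto simp: nth_eq_iff_index_eq)

lemma
  assumes "distinct c" "v \<in> set c"
  shows pos_less_length: "pos c v < length c" and nth_pos: "c ! pos c v = v"
proof -
  obtain i where "i < length c" "c ! i = v"
    using assms(2) by (auto simp: in_set_conv_nth)
  then show "pos c v < length c" "c ! pos c v = v"
    using pos_nth[OF assms(1)] by auto
qed

lemma pos_rev:
  assumes "distinct c" "v \<in> set c"
  shows "pos (rev c) v = length c - Suc (pos c v)"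
proof -
  have "rev c ! (length c - Suc (pos c v)) = v"
    using pos_less_length[OF assms] nth_pos[OF assms] by (simp add: rev_nth)
  then show ?thesis
    using pos_nth[of "rev c" "length c - Suc (pos c v)"] assms length_pos_if_in_set[OF assms(2)]
    by simp
qed

context
  fixes c :: "'a list"
  assumes c: "distinct c"
begin

lemma cyc_dist_eq:
  assumes "u \<in> set c" "v \<in> set c"
  shows "cyc_dist c u v = (if pos c u \<le> pos c v then pos c v - pos c u else pos c v + length c - pos c u)"
proof -
  have lt: "pos c u < length c" "pos c v < length c"
    using pos_less_length[OF c] assms by blast+
  show ?thesis
  proof (cases "pos c u \<le> pos c v")
    case True
    then have "pos c v + length c - pos c u = (pos c v - pos c u) + length c"
      by simp
    then show ?thesis
      using True lt unfolding cyc_dist_def by (metis less_imp_diff_less mod_add_self2 mod_less)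
  next
    case False
    then show ?thesis
      using lt by (simp add: cyc_dist_def)
  qed
qed

lemma cyc_dist_less:
  assumes "u \<in> set c" "v \<in> set c"
  shows "cyc_dist c u v < length c"
  using cyc_dist_eq[OF assms] pos_less_length[OF c assms(1)] pos_less_length[OF c assms(2)]
  by (simp split: if_split; arith)

lemma cyc_dist_eq_0_iff:
  assumes "u \<in> set c" "v \<in> set c"
  shows "cyc_dist c u v = 0 \<longleftrightarrow> u = v"
proof -
  have "cyc_dist c u v = 0 \<longleftrightarrow> pos c u = pos c v"
    using cyc_dist_eq[OF assms] pos_less_length[OF c assms(1)] pos_less_length[OF c assms(2)]
    by (simp split: if_split) linarith
  then show ?thesis
    using nth_pos[OF c assms(1)] nth_pos[OF c assms(2)] by metis
qed

lemma cyc_dist_self [simp]: "u \<in> set c \<Longrightarrow> cyc_dist c u u = 0"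
  using cyc_dist_eq_0_iff by blast

lemma cyc_dist_add_swap:
  assumes "u \<in> set c" "v \<in> set c" "u \<noteq> v"
  shows "cyc_dist c u v + cyc_dist c v u = length c"
proof -
  have "pos c u \<noteq> pos c v"
    using nth_pos[OF c assms(1)] nth_pos[OF c assms(2)] assms(3) by metis
  then show ?thesis
    using cyc_dist_eq[OF assms(1,2)] cyc_dist_eq[OF assms(2,1)]
      pos_less_length[OF c assms(1)] pos_less_length[OF c assms(2)]
    by (simp split: if_split)
qed

lemma cyc_dist_triangle:
  assumes "u \<in> set c" "v \<in> set c" "w \<in> set c"
  shows "cyc_dist c u w = cyc_dist c u v + cyc_dist c v w \<or>
         cyc_dist c u w + length c = cyc_dist c u v + cyc_dist c v w"
  unfolding cyc_dist_eq[OF assms(1,2)] cyc_dist_eq[OF assms(2,3)] cyc_dist_eq[OF assms(1,3)]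
  using pos_less_length[OF c assms(1)] pos_less_length[OF c assms(2)] pos_less_length[OF c assms(3)]
  by (simp split: if_split) arith

lemma cyc_dist_nth:
  assumes "u \<in> set c" "i < length c"
  shows "cyc_dist c u (c ! ((pos c u + i) mod length c)) = i"
proof -
  have p: "pos c (c ! ((pos c u + i) mod length c)) = (pos c u + i) mod length c"
    using pos_nth[OF c] length_pos_if_in_set[OF assms(1)] by simp
  have pu: "pos c u < length c"
    using pos_less_length[OF c assms(1)] .
  show ?thesis
  proof (cases "pos c u + i < length c")
    case True
    then show ?thesis
      unfolding cyc_dist_def p using assms(2) by simp
  next
    case False
    then have "(pos c u + i) mod length c = pos c u + i - length c"
      using pu assms(2) by (simp add: mod_if)
    then show ?thesis
      unfolding cyc_dist_def p using False pu assms(2) by (simp add: mod_if)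
  qed
qed

lemma nth_cyc_dist:
  assumes "u \<in> set c" "v \<in> set c"
  shows "c ! ((pos c u + cyc_dist c u v) mod length c) = v"
proof -
  have "(pos c u + cyc_dist c u v) mod length c = pos c v"
    using cyc_dist_eq[OF assms] pos_less_length[OF c assms(1)] pos_less_length[OF c assms(2)]
    by (auto simp: mod_if)
  then show ?thesis
    using nth_pos[OF c assms(2)] by simp
qed

lemma cyc_dist_rev:
  assumes "u \<in> set c" "v \<in> set c"
  shows "cyc_dist (rev c) u v = cyc_dist c v u"
  using pos_rev[OF c assms(1)] pos_rev[OF c assms(2)]
    pos_less_length[OF c assms(1)] pos_less_length[OF c assms(2)]
  by (simp add: cyc_dist_def add.commute)

end

lemma length_cyc_seg [simp]: "length (cyc_seg c a m) = m"
  by (simp add: cyc_seg_def)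

lemma cyc_seg_eq_Nil_iff [simp]: "cyc_seg c a m = [] \<longleftrightarrow> m = 0"
  by (simp add: cyc_seg_def)

lemma nth_cyc_seg: "i < m \<Longrightarrow> cyc_seg c a m ! i = c ! ((a + i) mod length c)"
  by (simp add: cyc_seg_def)

context
  fixes c :: "'a list"
  assumes c: "distinct c"
begin

lemma cyc_seg_eq_from_pos:
  assumes "c \<noteq> []"
  shows "cyc_seg c a m = cyc_seg c (pos c (c ! (a mod length c))) m"
  using pos_nth[OF c, of "a mod length c"] assms by (simp add: cyc_seg_def mod_add_left_eq)

lemma cyc_dist_nth_cyc_seg:
  assumes "u \<in> set c" "i < m" "m \<le> length c"
  shows "cyc_dist c u (cyc_seg c (pos c u) m ! i) = i"
  using cyc_dist_nth[OF c assms(1)] assms(2,3) by (simp add: nth_cyc_seg)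

lemma set_cyc_seg:
  assumes "u \<in> set c" "m \<le> length c"
  shows "set (cyc_seg c (pos c u) m) = {z \<in> set c. cyc_dist c u z < m}"
proof
  show "set (cyc_seg c (pos c u) m) \<subseteq> {z \<in> set c. cyc_dist c u z < m}"
  proof
    fix z assume "z \<in> set (cyc_seg c (pos c u) m)"
    then obtain i where i: "i < m" "z = cyc_seg c (pos c u) m ! i"
      by (auto simp: in_set_conv_nth)
    then have "z \<in> set c"
      using length_pos_if_in_set[OF assms(1)] by (simp add: nth_cyc_seg)
    then show "z \<in> {z \<in> set c. cyc_dist c u z < m}"
      using i cyc_dist_nth_cyc_seg[OF assms(1) i(1) assms(2)] by simp
  qed
  show "{z \<in> set c. cyc_dist c u z < m} \<subseteq> set (cyc_seg c (pos c u) m)"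
  proof
    fix z assume z: "z \<in> {z \<in> set c. cyc_dist c u z < m}"
    then have "cyc_seg c (pos c u) m ! cyc_dist c u z = z"
      using nth_cyc_dist[OF c assms(1)] by (simp add: nth_cyc_seg)
    then show "z \<in> set (cyc_seg c (pos c u) m)"
      using z nth_mem[of "cyc_dist c u z" "cyc_seg c (pos c u) m"] by simp
  qed
qed

lemma distinct_cyc_seg:
  assumes "m \<le> length c"
  shows "distinct (cyc_seg c a m)"
proof (cases "c = []")
  case False
  define u where "u = c ! (a mod length c)"
  have u: "u \<in> set c"
    using False by (simp add: u_def)
  have "inj_on (\<lambda>i. cyc_seg c (pos c u) m ! i) {..<m}"
    by (rule inj_on_inverseI[where g = "cyc_dist c u"]) (use cyc_dist_nth_cyc_seg[OF u _ assms] in simp)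
  then have "distinct (cyc_seg c (pos c u) m)"
    unfolding distinct_conv_nth inj_on_def by auto
  then show ?thesis
    using cyc_seg_eq_from_pos[OF False] by (simp add: u_def)
qed (use assms in \<open>simp add: cyc_seg_def\<close>)

end

lemma dpath_cyc_seg:
  assumes "dcycle V A c" "0 < m" "m \<le> length c"
  shows "dpath V A (cyc_seg c a m)"
proof -
  have c: "distinct c" "c \<noteq> []" "set c \<subseteq> V"
    and arc: "\<And>i. i < length c \<Longrightarrow> (c ! i, c ! (Suc i mod length c)) \<in> A"
    using assms(1) unfolding dcycle_def by auto
  have "(cyc_seg c a m ! i, cyc_seg c a m ! Suc i) \<in> A" if "Suc i < m" for i
  proof -
    have "Suc ((a + i) mod length c) mod length c = (a + Suc i) mod length c"
      by (simp add: mod_Suc_eq)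
    then show ?thesis
      using that arc[of "(a + i) mod length c"] c(2) by (simp add: nth_cyc_seg)
  qed
  moreover have "set (cyc_seg c a m) \<subseteq> V"
    using c unfolding cyc_seg_def by auto
  ultimately show ?thesis
    unfolding dpath_def using distinct_cyc_seg[OF c(1) assms(3)] assms(2) by auto
qed

definition cyc_arc :: "'a list \<Rightarrow> 'a \<Rightarrow> 'a \<Rightarrow> 'a list" where
  "cyc_arc c u v = cyc_seg c (pos c u) (Suc (cyc_dist c u v))"

lemma
  assumes "distinct c" "u \<in> set c" "v \<in> set c"
  shows length_cyc_arc: "length (cyc_arc c u v) = Suc (cyc_dist c u v)"
    and set_cyc_arc: "set (cyc_arc c u v) = {z \<in> set c. cyc_dist c u z \<le> cyc_dist c u v}"
    and hd_cyc_arc: "hd (cyc_arc c u v) = u"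
    and last_cyc_arc: "last (cyc_arc c u v) = v"
proof -
  have le: "Suc (cyc_dist c u v) \<le> length c"
    using cyc_dist_less[OF assms] by simp
  show "length (cyc_arc c u v) = Suc (cyc_dist c u v)"
    by (simp add: cyc_arc_def)
  show "set (cyc_arc c u v) = {z \<in> set c. cyc_dist c u z \<le> cyc_dist c u v}"
    unfolding cyc_arc_def set_cyc_seg[OF assms(1,2) le] by auto
  show "hd (cyc_arc c u v) = u"
    using nth_pos[OF assms(1,2)] pos_less_length[OF assms(1,2)]
    by (simp add: cyc_arc_def hd_conv_nth nth_cyc_seg)
  show "last (cyc_arc c u v) = v"
    using nth_cyc_dist[OF assms] by (simp add: cyc_arc_def last_conv_nth nth_cyc_seg)
qed

lemma dpath_cyc_arc:
  assumes "dcycle V A c" "u \<in> set c" "v \<in> set c"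
  shows "dpath V A (cyc_arc c u v)"
proof -
  have "distinct c"
    using assms(1) by (simp add: dcycle_def)
  then show ?thesis
    unfolding cyc_arc_def using dpath_cyc_seg[OF assms(1)] cyc_dist_less[OF _ assms(2,3)] by simp
qed

section \<open>Subpaths of cycles and common paths\<close>

context
  fixes C P :: "'a list"
  assumes C: "distinct C" and P: "cyc_subpath C P"
begin

lemma hd_cyc_subpath_in: "hd P \<in> set C"
  and cyc_subpath_eq_cyc_seg: "P = cyc_seg C (pos C (hd P)) (length P)"
proof -
  obtain a where a: "P = cyc_seg C a (length P)" and "P \<noteq> []" "length P \<le> length C"
    using P unfolding cyc_subpath_def by blast
  then have "C \<noteq> []" and hd: "hd P = C ! (a mod length C)"
    using nth_cyc_seg[of 0 "length P" C a] by (auto simp: hd_conv_nth)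
  then show "hd P \<in> set C"
    by simp
  have "P = cyc_seg C (pos C (C ! (a mod length C))) (length P)"
    by (rule trans[OF a cyc_seg_eq_from_pos[OF C \<open>C \<noteq> []\<close>]])
  then show "P = cyc_seg C (pos C (hd P)) (length P)"
    unfolding hd .
qed

lemma set_cyc_subpath: "set P = {z \<in> set C. cyc_dist C (hd P) z < length P}"
proof -
  have "set P = set (cyc_seg C (pos C (hd P)) (length P))"
    using cyc_subpath_eq_cyc_seg by (rule arg_cong)
  also have "\<dots> = {z \<in> set C. cyc_dist C (hd P) z < length P}"
    using set_cyc_seg[OF C hd_cyc_subpath_in] P by (simp add: cyc_subpath_def)
  finally show ?thesis .
qed

lemma cyc_dist_hd_cyc_subpath_nth:
  assumes "i < length P"
  shows "cyc_dist C (hd P) (P ! i) = i"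
proof -
  have "P ! i = cyc_seg C (pos C (hd P)) (length P) ! i"
    using cyc_subpath_eq_cyc_seg by (rule arg_cong)
  then show ?thesis
    using cyc_dist_nth_cyc_seg[OF C hd_cyc_subpath_in assms] P by (simp add: cyc_subpath_def)
qed

lemma last_cyc_subpath_in: "last P \<in> set C"
  and cyc_dist_hd_last_cyc_subpath: "cyc_dist C (hd P) (last P) = length P - 1"
proof -
  have "P \<noteq> []"
    using P by (simp add: cyc_subpath_def)
  then show "last P \<in> set C"
    using set_cyc_subpath last_in_set by blast
  show "cyc_dist C (hd P) (last P) = length P - 1"
    using cyc_dist_hd_cyc_subpath_nth[of "length P - 1"] \<open>P \<noteq> []\<close> by (simp add: last_conv_nth)
qed

lemma cyc_dist_via_cyc_subpath:
  assumes "z \<in> set P"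
  shows "cyc_dist C (hd P) z + cyc_dist C z (last P) = length P - 1"
proof -
  have z: "z \<in> set C" "cyc_dist C (hd P) z < length P"
    using assms set_cyc_subpath by auto
  then show ?thesis
    using cyc_dist_triangle[OF C hd_cyc_subpath_in z(1) last_cyc_subpath_in]
      cyc_dist_less[OF C z(1) last_cyc_subpath_in] cyc_dist_hd_last_cyc_subpath by linarith
qed

lemma set_cyc_subpath_to_last: "set P = {z \<in> set C. cyc_dist C z (last P) < length P}"
proof (intro set_eqI iffI)
  fix z assume "z \<in> set P"
  then show "z \<in> {z \<in> set C. cyc_dist C z (last P) < length P}"
    using set_cyc_subpath cyc_dist_via_cyc_subpath by fastforce
next
  fix z assume z: "z \<in> {z \<in> set C. cyc_dist C z (last P) < length P}"
  then have "cyc_dist C (hd P) z < length P"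
    using cyc_dist_triangle[OF C hd_cyc_subpath_in _ last_cyc_subpath_in, of z]
      cyc_dist_less[OF C hd_cyc_subpath_in, of z] cyc_dist_hd_last_cyc_subpath by auto
  then show "z \<in> set P"
    using z set_cyc_subpath by blast
qed

end

lemma cyc_subpath_unique:
  assumes "distinct C" "cyc_subpath C P" "cyc_subpath C P'" "set P = set P'"
    and "2 * length P < length C"
  shows "P = P'"
proof -
  have "distinct P" "distinct P'"
    using assms(1-3) distinct_cyc_seg[OF assms(1)] cyc_subpath_eq_cyc_seg
    unfolding cyc_subpath_def by metis+
  then have len: "length P = length P'"
    using assms(4) by (metis distinct_card)
  have "hd P \<in> set P'" "hd P' \<in> set P"
    using assms(2-4) hd_in_set unfolding cyc_subpath_def by metis+
  then have "cyc_dist C (hd P) (hd P') < length P" "cyc_dist C (hd P') (hd P) < length P"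
    using set_cyc_subpath[OF assms(1,2)] set_cyc_subpath[OF assms(1,3)] len by auto
  then have "hd P = hd P'"
    using cyc_dist_add_swap[OF assms(1) hd_cyc_subpath_in[OF assms(1,2)] hd_cyc_subpath_in[OF assms(1,3)]]
      assms(5) by linarith
  then show ?thesis
    using cyc_subpath_eq_cyc_seg[OF assms(1,2)] cyc_subpath_eq_cyc_seg[OF assms(1,3)] len by metis
qed

lemma k_suitable_dcycle:
  assumes "k_suitable V A k \<C>" "C \<in> \<C>"
  shows "dcycle V A C" "8 * k \<le> length C" "distinct C"
  using assms by (auto simp: k_suitable_def dcycle_def)

context
  fixes V A k \<C> Ci Cj
  assumes suitable: "k_suitable V A k \<C>" and in_\<C>: "Ci \<in> \<C>" "Cj \<in> \<C>"
    and meet: "Ci \<noteq> Cj" "set Ci \<inter> set Cj \<noteq> {}"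
begin

lemma common_path_spec:
  "cyc_subpath Ci (common_path Ci Cj)" "cyc_subpath Cj (common_path Ci Cj)"
  "length (common_path Ci Cj) \<le> k" "set (common_path Ci Cj) = set Ci \<inter> set Cj"
proof -
  obtain P where P: "cyc_subpath Ci P" "cyc_subpath Cj P" "length P \<le> k" "set P = set Ci \<inter> set Cj"
    using suitable in_\<C> meet unfolding k_suitable_def by blast
  have "0 < length P"
    using P(1) by (simp add: cyc_subpath_def)
  then have "2 * length P < length Ci"
    using P(3) k_suitable_dcycle(2)[OF suitable in_\<C>(1)] by linarith
  have "common_path Ci Cj = P"
    unfolding common_path_def
  proof (rule the_equality)
    fix P' assume "cyc_subpath Ci P' \<and> cyc_subpath Cj P' \<and> set P' = set Ci \<inter> set Cj"
    then show "P' = P"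
      using cyc_subpath_unique[OF k_suitable_dcycle(3)[OF suitable in_\<C>(1)] P(1), of P'] P(4)
        \<open>2 * length P < length Ci\<close> by simp
  qed (use P in simp)
  then show "cyc_subpath Ci (common_path Ci Cj)" "cyc_subpath Cj (common_path Ci Cj)"
    "length (common_path Ci Cj) \<le> k" "set (common_path Ci Cj) = set Ci \<inter> set Cj"
    using P by auto
qed

lemma common_path_ne: "common_path Ci Cj \<noteq> []"
  using common_path_spec(1) by (simp add: cyc_subpath_def)

lemma hd_common_path_in: "hd (common_path Ci Cj) \<in> set Ci" "hd (common_path Ci Cj) \<in> set Cj"
  and last_common_path_in: "last (common_path Ci Cj) \<in> set Ci" "last (common_path Ci Cj) \<in> set Cj"
  using hd_in_set[OF common_path_ne] last_in_set[OF common_path_ne]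
  unfolding common_path_spec(4) by blast+

lemma inter_iff_cyc_dist_from_hd:
  "\<forall>z \<in> set Ci. z \<in> set Cj \<longleftrightarrow> cyc_dist Ci (hd (common_path Ci Cj)) z < length (common_path Ci Cj)"
  "\<forall>z \<in> set Cj. z \<in> set Ci \<longleftrightarrow> cyc_dist Cj (hd (common_path Ci Cj)) z < length (common_path Ci Cj)"
  using set_cyc_subpath[OF k_suitable_dcycle(3)[OF suitable in_\<C>(1)] common_path_spec(1)]
    set_cyc_subpath[OF k_suitable_dcycle(3)[OF suitable in_\<C>(2)] common_path_spec(2)]
    common_path_spec(4) by blast+

lemma inter_iff_cyc_dist_to_last:
  "\<forall>z \<in> set Ci. z \<in> set Cj \<longleftrightarrow> cyc_dist Ci z (last (common_path Ci Cj)) < length (common_path Ci Cj)"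
  "\<forall>z \<in> set Cj. z \<in> set Ci \<longleftrightarrow> cyc_dist Cj z (last (common_path Ci Cj)) < length (common_path Ci Cj)"
  using set_cyc_subpath_to_last[OF k_suitable_dcycle(3)[OF suitable in_\<C>(1)] common_path_spec(1)]
    set_cyc_subpath_to_last[OF k_suitable_dcycle(3)[OF suitable in_\<C>(2)] common_path_spec(2)]
    common_path_spec(4) by blast+

lemma cyc_dist_common_path_agree:
  assumes "z \<in> set Ci" "z \<in> set Cj"
  shows "cyc_dist Ci (hd (common_path Ci Cj)) z = cyc_dist Cj (hd (common_path Ci Cj)) z"
    and "cyc_dist Ci z (last (common_path Ci Cj)) = cyc_dist Cj z (last (common_path Ci Cj))"
proof -
  let ?P = "common_path Ci Cj"
  note di = k_suitable_dcycle(3)[OF suitable in_\<C>(1)] and dj = k_suitable_dcycle(3)[OF suitable in_\<C>(2)]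
  obtain i where i: "i < length ?P" "z = ?P ! i"
    using assms common_path_spec(4) by (metis IntI in_set_conv_nth)
  then show hd: "cyc_dist Ci (hd ?P) z = cyc_dist Cj (hd ?P) z"
    using cyc_dist_hd_cyc_subpath_nth[OF di common_path_spec(1)]
      cyc_dist_hd_cyc_subpath_nth[OF dj common_path_spec(2)] by simp
  have "z \<in> set ?P"
    using i by simp
  then show "cyc_dist Ci z (last ?P) = cyc_dist Cj z (last ?P)"
    using cyc_dist_via_cyc_subpath[OF di common_path_spec(1)]
      cyc_dist_via_cyc_subpath[OF dj common_path_spec(2)] hd by fastforce
qed

end

section \<open>Finding a subdivision of B(k,1;k)\<close>

text \<open>The subdivision consists of the path P, which leaves the cycle C at u and returns at w, and
  the two arcs of C between u and w.\<close>
lemma has_B_subdivision_of_ear: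
  assumes C: "dcycle V A C" "u \<in> set C" "w \<in> set C" "u \<noteq> w" "k \<le> cyc_dist C w u"
    and P: "dpath V A P" "hd P = u" "last P = w" "k \<le> length P - 1"
    and ear: "set P \<inter> set C \<subseteq> {u, w}" "\<not> set P \<subseteq> set C"
  shows "has_B_subdivision V A k 1 k"
proof -
  have d: "distinct C"
    using C(1) by (simp add: dcycle_def)
  let ?P2 = "cyc_arc C u w" and ?P3 = "cyc_arc C w u"
  have paths: "dpath V A ?P2" "dpath V A ?P3"
    using dpath_cyc_arc[OF C(1)] C(2,3) by auto
  have interiors: "interior P = set P - {u, w}" "interior ?P2 = set ?P2 - {u, w}"
    "interior ?P3 = set ?P3 - {u, w}"
    using interior_eq_set_minus_ends[of P] interior_eq_set_minus_ends[of ?P2]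
      interior_eq_set_minus_ends[of ?P3] P(1-3) paths
    by (auto simp: dpath_def hd_cyc_arc[OF d] last_cyc_arc[OF d] C(2,3))
  have len2: "1 \<le> length ?P2 - 1"
    using length_cyc_arc[OF d C(2,3)] cyc_dist_eq_0_iff[OF d C(2,3)] C(4) by simp
  have len3: "k \<le> length ?P3 - 1"
    using length_cyc_arc[OF d C(3,2)] C(5) by simp
  have distinct_paths: "P \<noteq> ?P2"
    using ear(2) set_cyc_arc[OF d C(2,3)] by auto
  have disjoint_ear: "interior P \<inter> interior ?P2 = {}" "interior P \<inter> interior ?P3 = {}"
    using interiors set_cyc_arc[OF d C(2,3)] set_cyc_arc[OF d C(3,2)] ear(1) by auto
  have disjoint_arcs: "interior ?P2 \<inter> interior ?P3 = {}"
  proof (rule ccontr)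
    assume "interior ?P2 \<inter> interior ?P3 \<noteq> {}"
    then obtain z where z: "z \<in> set C" "cyc_dist C u z \<le> cyc_dist C u w"
      "cyc_dist C w z \<le> cyc_dist C w u" "z \<noteq> u" "z \<noteq> w"
      using interiors set_cyc_arc[OF d C(2,3)] set_cyc_arc[OF d C(3,2)] by auto
    moreover have "cyc_dist C w z \<noteq> 0" "cyc_dist C u z \<noteq> 0"
      using cyc_dist_eq_0_iff[OF d C(3) z(1)] cyc_dist_eq_0_iff[OF d C(2) z(1)] z(4,5) by auto
    ultimately show False
      using cyc_dist_triangle[OF d C(2,3) z(1)] cyc_dist_add_swap[OF d C(2-4)] by linarith
  qed
  show ?thesis
    by (rule has_B_subdivisionI[where P = P and Q = ?P2 and R = ?P3])
      (use C(2-4) P paths len2 len3 distinct_paths disjoint_ear disjoint_arcs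
        hd_cyc_arc[OF d] last_cyc_arc[OF d] in simp_all)
qed

lemma cyc_arc_meets_interval_at_end:
  assumes "distinct c" "s \<in> set c" "t \<in> set c" "z \<in> set c"
    and "L \<le> cyc_dist c s t" "cyc_dist c t z \<le> cyc_dist c t s" "cyc_dist c s z < L"
  shows "z = s"
proof (rule ccontr)
  assume "z \<noteq> s"
  then have "cyc_dist c s z \<noteq> 0"
    using cyc_dist_eq_0_iff[OF assms(1,2,4)] by simp
  moreover have "s \<noteq> t"
    using assms(5,7) cyc_dist_self[OF assms(1,2)] by auto
  ultimately show False
    using assms(5-7) cyc_dist_triangle[OF assms(1,3,2,4)] cyc_dist_triangle[OF assms(1,2,3,4)]
      cyc_dist_add_swap[OF assms(1,2,3)] by linarith
qed

lemma cyc_arc_meets_interval_at_start: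
  assumes "distinct c" "s \<in> set c" "t \<in> set c" "z \<in> set c"
    and "M \<le> cyc_dist c s t" "cyc_dist c t z \<le> cyc_dist c t s" "cyc_dist c z t < M"
  shows "z = t"
proof (rule ccontr)
  assume "z \<noteq> t"
  moreover have "s \<noteq> t"
    using assms(5,7) cyc_dist_self[OF assms(1,3)] by auto
  ultimately show False
    using assms(5-7) cyc_dist_add_swap[OF assms(1,2,3)] cyc_dist_add_swap[OF assms(1,4,3)] by linarith
qed

text \<open>The configuration refuting part (ii) for Q^-: in the paper's notation s = s_{1,j},
  b = s_{1,l} and t = t_{j,l}, and y is a vertex of Q^-_l on C_j that does not lie on Q^-_j.\<close>
locale backward_crossing =
  fixes V :: "'a set" and A :: "('a \<times> 'a) set" and k :: nat
    and C1 Cj Cl :: "'a list" and s b t y :: 'a and L1 L2 M :: nat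
  assumes cycles: "dcycle V A C1" "dcycle V A Cj" "dcycle V A Cl"
    and long: "8 * k \<le> length C1" "8 * k \<le> length Cj" "8 * k \<le> length Cl"
    and short: "L1 \<le> k" "L2 \<le> k" "M \<le> k"
    and mem: "s \<in> set C1" "s \<in> set Cj" "b \<in> set C1" "b \<in> set Cl" "t \<in> set Cj" "t \<in> set Cl"
      "y \<in> set Cj" "y \<in> set Cl" "y \<notin> set C1"
    and C1_Cj: "\<forall>z \<in> set Cj. z \<in> set C1 \<longleftrightarrow> cyc_dist Cj s z < L1"
    and C1_Cl: "\<forall>z \<in> set C1. z \<in> set Cl \<longleftrightarrow> cyc_dist C1 b z < L2"
      "\<forall>z \<in> set Cl. z \<in> set C1 \<longleftrightarrow> cyc_dist Cl b z < L2"
    and Cj_Cl: "\<forall>z \<in> set Cj. z \<in> set Cl \<longleftrightarrow> cyc_dist Cj z t < M"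
      "\<forall>z \<in> set Cl. z \<in> set Cj \<longleftrightarrow> cyc_dist Cl z t < M"
      "\<forall>z \<in> set Cj. z \<in> set Cl \<longrightarrow> cyc_dist Cj z t = cyc_dist Cl z t"
    and y_near: "cyc_dist Cl y b \<le> 3 * k"
    and y_far: "3 * k < cyc_dist Cj y s"
begin

lemma distinct_cycles: "distinct C1" "distinct Cj" "distinct Cl"
  using cycles by (simp_all add: dcycle_def)

lemma b_notin_Cj: "b \<notin> set Cj"
proof
  note d = distinct_cycles
  assume bj: "b \<in> set Cj"
  have "cyc_dist Cj s b < L1" "cyc_dist Cl b t < M" "cyc_dist Cj b t = cyc_dist Cl b t"
    using C1_Cj Cj_Cl(2,3) bj mem(3,4) by blast+
  moreover have "\<not> cyc_dist Cj s y < L1" "y \<noteq> s"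
    using C1_Cj mem(1,7,9) by blast+
  moreover have "cyc_dist Cj y t = cyc_dist Cl y t" "cyc_dist Cj y t < M"
    using Cj_Cl(1,3) mem(7,8) by blast+
  ultimately show False
    using cyc_dist_triangle[OF d(3) mem(8,4,6)] cyc_dist_triangle[OF d(2) mem(7) bj mem(5)]
      cyc_dist_triangle[OF d(2) mem(2,7) bj] cyc_dist_add_swap[OF d(2) mem(7,2)]
      cyc_dist_less[OF d(2) mem(7) bj] y_near y_far short long
    by linarith
qed

text \<open>y lies on the short arc C_l[t,b], so the arc C_l[b,t] is long.\<close>
lemma cyc_dist_b_t: "5 * k \<le> cyc_dist Cl b t"
proof -
  note d = distinct_cycles
  have "t \<noteq> b" "\<not> cyc_dist Cl b t < M"
    using b_notin_Cj Cj_Cl(2) mem(4,5) by blast+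
  moreover have "cyc_dist Cl y t < M"
    using Cj_Cl(2) mem(7,8) by blast
  ultimately show ?thesis
    using cyc_dist_triangle[OF d(3) mem(8,6,4)] cyc_dist_add_swap[OF d(3) mem(6,4)]
      y_near long short by linarith
qed

lemma t_notin_C1: "t \<notin> set C1"
  using C1_Cl(2) mem(6) cyc_dist_b_t short by fastforce

lemma s_notin_Cl: "s \<notin> set Cl"
proof
  assume sl: "s \<in> set Cl"
  have "cyc_dist Cl b s < L2" "cyc_dist Cl s t < M"
    using C1_Cl(2) Cj_Cl(2) sl mem(1,2) by blast+
  then show False
    using cyc_dist_triangle[OF distinct_cycles(3) mem(4) sl mem(6)] cyc_dist_b_t short long
    by linarith
qed

lemma cyc_dist_t_s: "k \<le> cyc_dist Cj t s"
proof -
  have "cyc_dist Cj y t < M"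
    using Cj_Cl(1) mem(7,8) by blast
  then show ?thesis
    using cyc_dist_triangle[OF distinct_cycles(2) mem(7,5,2)] y_far short long by linarith
qed

lemma Cj_arc_meets:
  assumes "z \<in> set (cyc_arc Cj t s)"
  shows Cj_arc_meets_C1: "z \<in> set C1 \<Longrightarrow> z = s"
    and Cj_arc_meets_Cl: "z \<in> set Cl \<Longrightarrow> z = t"
proof -
  note d = distinct_cycles
  have z: "z \<in> set Cj" "cyc_dist Cj t z \<le> cyc_dist Cj t s"
    using assms set_cyc_arc[OF d(2) mem(5,2)] by auto
  have "L1 \<le> cyc_dist Cj s t" "M \<le> cyc_dist Cj s t"
    using C1_Cj Cj_Cl(1) t_notin_C1 s_notin_Cl mem(2,5) by (meson not_less)+
  then show "z \<in> set C1 \<Longrightarrow> z = s" "z \<in> set Cl \<Longrightarrow> z = t"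
    using cyc_arc_meets_interval_at_end[OF d(2) mem(2,5) z(1) _ z(2)]
      cyc_arc_meets_interval_at_start[OF d(2) mem(2,5) z(1) _ z(2)] C1_Cj Cj_Cl(1) z(1) by blast+
qed

lemma C1_arc_meets_Cl:
  assumes "z \<in> set (cyc_arc C1 s b)" "z \<in> set Cl"
  shows "z = b"
proof -
  note d = distinct_cycles
  have z: "z \<in> set C1" "cyc_dist C1 s z \<le> cyc_dist C1 s b"
    using assms(1) set_cyc_arc[OF d(1) mem(1,3)] by auto
  have "L2 \<le> cyc_dist C1 b s"
    using C1_Cl(1) s_notin_Cl mem(1) by (meson not_less)
  then show ?thesis
    using cyc_arc_meets_interval_at_end[OF d(1) mem(3,1) z(1) _ z(2)] C1_Cl(1) z(1) assms(2) by blast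
qed

text \<open>The path C_j[t,s] C_1[s,b] is an ear of C_l.\<close>
lemma has_B_subdivision: "has_B_subdivision V A k 1 k"
proof -
  note d = distinct_cycles
  let ?Q1 = "cyc_arc Cj t s" and ?Q2 = "cyc_arc C1 s b"
  have ends: "hd ?Q1 = t" "last ?Q1 = s" "hd ?Q2 = s" "last ?Q2 = b"
    using hd_cyc_arc[OF d(2) mem(5,2)] last_cyc_arc[OF d(2) mem(5,2)]
      hd_cyc_arc[OF d(1) mem(1,3)] last_cyc_arc[OF d(1) mem(1,3)] by simp_all
  have Q_ne: "?Q1 \<noteq> []" "?Q2 \<noteq> []" "last ?Q1 = hd ?Q2"
    using ends by (simp_all add: cyc_arc_def)
  then have "s \<in> set ?Q1" "s \<in> set ?Q2"
    using ends last_in_set hd_in_set by metis+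
  moreover have "set ?Q2 \<subseteq> set C1"
    using set_cyc_arc[OF d(1) mem(1,3)] by auto
  ultimately have "set ?Q1 \<inter> set ?Q2 = {hd ?Q2}"
    using Cj_arc_meets_C1 ends(3) by auto
  then have path: "dpath V A (?Q1 @ tl ?Q2)"
    using dpath_append[OF dpath_cyc_arc[OF cycles(2) mem(5,2)] dpath_cyc_arc[OF cycles(1) mem(1,3)]]
      ends(2,3) by simp
  have meets: "set (?Q1 @ tl ?Q2) \<inter> set Cl \<subseteq> {t, b}" "\<not> set (?Q1 @ tl ?Q2) \<subseteq> set Cl"
    using Cj_arc_meets_Cl C1_arc_meets_Cl \<open>s \<in> set ?Q1\<close> s_notin_Cl set_append_tl[OF Q_ne] ends
    by auto
  have ends_path: "hd (?Q1 @ tl ?Q2) = t" "last (?Q1 @ tl ?Q2) = b"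
    using last_append_tl[OF Q_ne] ends Q_ne by simp_all
  have "k \<le> length (?Q1 @ tl ?Q2) - 1"
    using length_cyc_arc[OF d(1) mem(1,3)] length_cyc_arc[OF d(2) mem(5,2)] cyc_dist_t_s by simp
  moreover have "t \<noteq> b"
    using b_notin_Cj mem(5) by blast
  ultimately show ?thesis
    using has_B_subdivision_of_ear[OF cycles(3) mem(6,4) _ _ path ends_path _ meets] cyc_dist_b_t
    by simp
qed

end

text \<open>The mirror image of backward_crossing, refuting part (ii) for Q^+: here
  a = t_{1,j}, a' = t_{1,l} and r = s_{j,l}.\<close>
locale forward_crossing =
  fixes V :: "'a set" and A :: "('a \<times> 'a) set" and k :: nat
    and C1 Cj Cl :: "'a list" and a a' r y :: 'a and L1 L2 M :: nat
  assumes cycles: "dcycle V A C1" "dcycle V A Cj" "dcycle V A Cl"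
    and long: "8 * k \<le> length C1" "8 * k \<le> length Cj" "8 * k \<le> length Cl"
    and short: "L1 \<le> k" "L2 \<le> k" "M \<le> k"
    and mem: "a \<in> set C1" "a \<in> set Cj" "a' \<in> set C1" "a' \<in> set Cl" "r \<in> set Cj" "r \<in> set Cl"
      "y \<in> set Cj" "y \<in> set Cl" "y \<notin> set C1"
    and C1_Cj: "\<forall>z \<in> set Cj. z \<in> set C1 \<longleftrightarrow> cyc_dist Cj z a < L1"
    and C1_Cl: "\<forall>z \<in> set C1. z \<in> set Cl \<longleftrightarrow> cyc_dist C1 z a' < L2"
      "\<forall>z \<in> set Cl. z \<in> set C1 \<longleftrightarrow> cyc_dist Cl z a' < L2"
    and Cj_Cl: "\<forall>z \<in> set Cj. z \<in> set Cl \<longleftrightarrow> cyc_dist Cj r z < M"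
      "\<forall>z \<in> set Cl. z \<in> set Cj \<longleftrightarrow> cyc_dist Cl r z < M"
      "\<forall>z \<in> set Cj. z \<in> set Cl \<longrightarrow> cyc_dist Cj r z = cyc_dist Cl r z"
    and y_near: "cyc_dist Cl a' y \<le> 3 * k"
    and y_far: "3 * k < cyc_dist Cj a y"
begin

lemma has_B_subdivision: "has_B_subdivision V A k 1 k"
proof -
  have d: "distinct C1" "distinct Cj" "distinct Cl"
    using cycles by (simp_all add: dcycle_def)
  interpret rev: backward_crossing V "A\<inverse>" k "rev C1" "rev Cj" "rev Cl" a a' r y L1 L2 M
  proof
    show "\<forall>z \<in> set (rev Cj). z \<in> set (rev C1) \<longleftrightarrow> cyc_dist (rev Cj) a z < L1"
      using C1_Cj cyc_dist_rev[OF d(2) mem(2)] by simp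
    show "\<forall>z \<in> set (rev C1). z \<in> set (rev Cl) \<longleftrightarrow> cyc_dist (rev C1) a' z < L2"
      using C1_Cl(1) cyc_dist_rev[OF d(1) mem(3)] by simp
    show "\<forall>z \<in> set (rev Cl). z \<in> set (rev C1) \<longleftrightarrow> cyc_dist (rev Cl) a' z < L2"
      using C1_Cl(2) cyc_dist_rev[OF d(3) mem(4)] by simp
    show "\<forall>z \<in> set (rev Cj). z \<in> set (rev Cl) \<longleftrightarrow> cyc_dist (rev Cj) z r < M"
      using Cj_Cl(1) cyc_dist_rev[OF d(2) _ mem(5)] by simp
    show "\<forall>z \<in> set (rev Cl). z \<in> set (rev Cj) \<longleftrightarrow> cyc_dist (rev Cl) z r < M"
      using Cj_Cl(2) cyc_dist_rev[OF d(3) _ mem(6)] by simp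
    show "\<forall>z \<in> set (rev Cj). z \<in> set (rev Cl) \<longrightarrow> cyc_dist (rev Cj) z r = cyc_dist (rev Cl) z r"
      using Cj_Cl(3) cyc_dist_rev[OF d(2) _ mem(5)] cyc_dist_rev[OF d(3) _ mem(6)] by simp
  qed (use cycles long short mem y_near y_far dcycle_rev cyc_dist_rev[OF d(3) mem(8,4)]
      cyc_dist_rev[OF d(2) mem(7,2)] in simp_all)
  show ?thesis
    using has_B_subdivision_converse[OF rev.has_B_subdivision] .
qed

end

section \<open>The sets Q^- and Q^+\<close>

lemma set_cyc_seg_before:
  assumes "distinct C" "s \<in> set C" "0 < m" "m < length C"
  shows "set (cyc_seg C (pos C s + length C - m) m) = {z \<in> set C. 1 \<le> cyc_dist C z s \<and> cyc_dist C z s \<le> m}"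
proof -
  let ?v = "C ! ((pos C s + length C - m) mod length C)"
  have v: "?v \<in> set C"
    using assms(2) by (intro nth_mem mod_less_divisor length_pos_if_in_set)
  have "pos C s + length C - m = pos C s + (length C - m)"
    using assms(4) by simp
  then have "cyc_dist C s ?v = length C - m"
    using cyc_dist_nth[OF assms(1,2), of "length C - m"] assms(3,4) by simp
  moreover have "?v \<noteq> s"
    using calculation cyc_dist_self[OF assms(1,2)] assms(3,4) by auto
  ultimately have "cyc_dist C ?v s = m"
    using cyc_dist_add_swap[OF assms(1,2) v] assms(4) by auto
  have "cyc_seg C (pos C s + length C - m) m = cyc_seg C (pos C ?v) m"
    by (rule cyc_seg_eq_from_pos[OF assms(1)]) (use assms(2) in auto)
  then have "set (cyc_seg C (pos C s + length C - m) m) = {z \<in> set C. cyc_dist C ?v z < m}"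
    using set_cyc_seg[OF assms(1) v] assms(4) by simp
  also have "\<dots> = {z \<in> set C. 1 \<le> cyc_dist C z s \<and> cyc_dist C z s \<le> m}"
  proof (intro Collect_cong conj_cong refl)
    fix z assume z: "z \<in> set C"
    show "cyc_dist C ?v z < m \<longleftrightarrow> 1 \<le> cyc_dist C z s \<and> cyc_dist C z s \<le> m"
      using cyc_dist_triangle[OF assms(1) v z assms(2)] cyc_dist_less[OF assms(1) v z]
        cyc_dist_less[OF assms(1) z assms(2)] \<open>cyc_dist C ?v s = m\<close> assms(4) by linarith
  qed
  finally show ?thesis .
qed

lemma set_cyc_seg_after:
  assumes "distinct C" "t \<in> set C" "0 < m" "m < length C"
  shows "set (cyc_seg C (Suc (pos C t)) m) = {z \<in> set C. 1 \<le> cyc_dist C t z \<and> cyc_dist C t z \<le> m}"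
proof -
  let ?v = "C ! (Suc (pos C t) mod length C)"
  have v: "?v \<in> set C"
    using assms(2) by (intro nth_mem mod_less_divisor length_pos_if_in_set)
  have "cyc_dist C t ?v = 1"
    using cyc_dist_nth[OF assms(1,2), of 1] assms(3,4) by simp
  have "cyc_seg C (Suc (pos C t)) m = cyc_seg C (pos C ?v) m"
    by (rule cyc_seg_eq_from_pos[OF assms(1)]) (use assms(2) in auto)
  then have "set (cyc_seg C (Suc (pos C t)) m) = {z \<in> set C. cyc_dist C ?v z < m}"
    using set_cyc_seg[OF assms(1) v] assms(4) by simp
  also have "\<dots> = {z \<in> set C. 1 \<le> cyc_dist C t z \<and> cyc_dist C t z \<le> m}"
  proof (intro Collect_cong conj_cong refl)
    fix z assume z: "z \<in> set C"
    show "cyc_dist C ?v z < m \<longleftrightarrow> 1 \<le> cyc_dist C t z \<and> cyc_dist C t z \<le> m"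
      using cyc_dist_triangle[OF assms(1,2) v z] cyc_dist_less[OF assms(1) v z]
        cyc_dist_less[OF assms(1,2) z] \<open>cyc_dist C t ?v = 1\<close> assms(4) by linarith
  qed
  finally show ?thesis .
qed

lemma meetsD:
  assumes "Cj \<in> meets \<C> C1"
  shows "Cj \<in> \<C>" "C1 \<noteq> Cj" "set C1 \<inter> set Cj \<noteq> {}"
  using assms by (auto simp: meets_def)

context
  fixes V A k \<C> C1
  assumes suitable: "k_suitable V A k \<C>" and C1: "C1 \<in> \<C>" and k: "1 \<le> k"
begin

lemma set_Qminus:
  assumes "Cj \<in> meets \<C> C1"
  shows "set (Qminus k C1 Cj) = {z \<in> set Cj. 1 \<le> cyc_dist Cj z (hd (common_path C1 Cj)) \<and>
                                   cyc_dist Cj z (hd (common_path C1 Cj)) \<le> 3 * k}"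
  unfolding Qminus_def
  using set_cyc_seg_before[OF k_suitable_dcycle(3)[OF suitable meetsD(1)[OF assms]]
      hd_common_path_in(2)[OF suitable C1 meetsD[OF assms]]]
    k_suitable_dcycle(2)[OF suitable meetsD(1)[OF assms]] k by simp

lemma set_Qplus:
  assumes "Cj \<in> meets \<C> C1"
  shows "set (Qplus k C1 Cj) = {z \<in> set Cj. 1 \<le> cyc_dist Cj (last (common_path C1 Cj)) z \<and>
                                  cyc_dist Cj (last (common_path C1 Cj)) z \<le> 3 * k}"
  unfolding Qplus_def
  using set_cyc_seg_after[OF k_suitable_dcycle(3)[OF suitable meetsD(1)[OF assms]]
      last_common_path_in(2)[OF suitable C1 meetsD[OF assms]]]
    k_suitable_dcycle(2)[OF suitable meetsD(1)[OF assms]] k by simp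

lemma Qplus_Qminus_disjoint:
  assumes "Cj \<in> meets \<C> C1"
  shows "set (Qplus k C1 Cj) \<inter> set (Qminus k C1 Cj) = {}"
proof (rule ccontr)
  let ?s = "hd (common_path C1 Cj)" and ?t = "last (common_path C1 Cj)"
  note pair = suitable C1 meetsD[OF assms]
  note d = k_suitable_dcycle(3)[OF suitable meetsD(1)[OF assms]]
  assume "set (Qplus k C1 Cj) \<inter> set (Qminus k C1 Cj) \<noteq> {}"
  then obtain z where z: "z \<in> set Cj" "1 \<le> cyc_dist Cj ?t z" "cyc_dist Cj ?t z \<le> 3 * k"
    "cyc_dist Cj z ?s \<le> 3 * k"
    unfolding set_Qminus[OF assms] set_Qplus[OF assms] by auto
  have "cyc_dist Cj ?s ?t < k"
    using inter_iff_cyc_dist_from_hd(2)[OF pair] hd_common_path_in[OF pair]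
      last_common_path_in[OF pair] common_path_spec(3)[OF pair] by fastforce
  moreover have "z \<noteq> ?t"
    using z(2) cyc_dist_self[OF d last_common_path_in(2)[OF pair]] by auto
  ultimately show False
    using cyc_dist_triangle[OF d z(1) hd_common_path_in(2)[OF pair] last_common_path_in(2)[OF pair]]
      cyc_dist_add_swap[OF d z(1) last_common_path_in(2)[OF pair]] z
      k_suitable_dcycle(2)[OF suitable meetsD(1)[OF assms]] by linarith
qed

lemma Qminus_inter_C1:
  assumes "Cj \<in> meets \<C> C1"
  shows "set (Qminus k C1 Cj) \<inter> set C1 = {}"
proof (rule ccontr)
  let ?s = "hd (common_path C1 Cj)"
  note pair = suitable C1 meetsD[OF assms]
  note d = k_suitable_dcycle(3)[OF suitable meetsD(1)[OF assms]]
  assume "set (Qminus k C1 Cj) \<inter> set C1 \<noteq> {}"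
  then obtain y where y: "y \<in> set Cj" "y \<in> set C1" "1 \<le> cyc_dist Cj y ?s" "cyc_dist Cj y ?s \<le> 3 * k"
    unfolding set_Qminus[OF assms] by auto
  then have "cyc_dist Cj ?s y < k"
    using inter_iff_cyc_dist_from_hd(2)[OF pair] common_path_spec(3)[OF pair] by fastforce
  moreover have "y \<noteq> ?s"
    using y(3) cyc_dist_self[OF d hd_common_path_in(2)[OF pair]] by auto
  ultimately show False
    using cyc_dist_add_swap[OF d y(1) hd_common_path_in(2)[OF pair]] y(4)
      k_suitable_dcycle(2)[OF suitable meetsD(1)[OF assms]] by linarith
qed

lemma Qplus_inter_C1:
  assumes "Cj \<in> meets \<C> C1"
  shows "set (Qplus k C1 Cj) \<inter> set C1 = {}"
proof (rule ccontr)
  let ?t = "last (common_path C1 Cj)"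
  note pair = suitable C1 meetsD[OF assms]
  note d = k_suitable_dcycle(3)[OF suitable meetsD(1)[OF assms]]
  assume "set (Qplus k C1 Cj) \<inter> set C1 \<noteq> {}"
  then obtain y where y: "y \<in> set Cj" "y \<in> set C1" "1 \<le> cyc_dist Cj ?t y" "cyc_dist Cj ?t y \<le> 3 * k"
    unfolding set_Qplus[OF assms] by auto
  then have "cyc_dist Cj y ?t < k"
    using inter_iff_cyc_dist_to_last(2)[OF pair] common_path_spec(3)[OF pair] by fastforce
  moreover have "?t \<noteq> y"
    using y(3) cyc_dist_self[OF d last_common_path_in(2)[OF pair]] by auto
  ultimately show False
    using cyc_dist_add_swap[OF d last_common_path_in(2)[OF pair] y(1)] y(4)
      k_suitable_dcycle(2)[OF suitable meetsD(1)[OF assms]] by linarith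
qed

lemma in_Qminus_if_in_other_Qminus:
  assumes noB: "\<not> has_B_subdivision V A k 1 k"
    and mj: "Cj \<in> meets \<C> C1" and ml: "Cl \<in> meets \<C> C1" and jl: "Cj \<noteq> Cl"
    and y: "y \<in> set (Qminus k C1 Cl)" "y \<in> set Cj"
  shows "y \<in> set (Qminus k C1 Cj)"
proof (rule ccontr)
  assume y_out: "y \<notin> set (Qminus k C1 Cj)"
  let ?s = "hd (common_path C1 Cj)" and ?b = "hd (common_path C1 Cl)"
    and ?t = "last (common_path Cj Cl)"
  note pj = suitable C1 meetsD[OF mj] and pl = suitable C1 meetsD[OF ml]
  have yl: "y \<in> set Cl" "cyc_dist Cl y ?b \<le> 3 * k" and y_C1: "y \<notin> set C1"
    using y(1) set_Qminus[OF ml] Qminus_inter_C1[OF ml] by auto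
  then have pjl: "k_suitable V A k \<C>" "Cj \<in> \<C>" "Cl \<in> \<C>" "Cj \<noteq> Cl" "set Cj \<inter> set Cl \<noteq> {}"
    using suitable meetsD(1)[OF mj] meetsD(1)[OF ml] jl y(2) by blast+
  have cycles: "dcycle V A C1" "dcycle V A Cj" "dcycle V A Cl"
    and long: "8 * k \<le> length C1" "8 * k \<le> length Cj" "8 * k \<le> length Cl"
    using k_suitable_dcycle[OF suitable] C1 meetsD(1)[OF mj] meetsD(1)[OF ml] by blast+
  have "y \<noteq> ?s"
    using y_C1 hd_common_path_in(1)[OF pj] by auto
  then have "3 * k < cyc_dist Cj y ?s"
    using cyc_dist_eq_0_iff[OF k_suitable_dcycle(3)[OF pjl(1,2)] y(2) hd_common_path_in(2)[OF pj]]
      y_out y(2) set_Qminus[OF mj] by auto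
  have "\<forall>z \<in> set Cj. z \<in> set Cl \<longrightarrow> cyc_dist Cj z ?t = cyc_dist Cl z ?t"
    using cyc_dist_common_path_agree(2)[OF pjl] by blast
  have "backward_crossing V A k C1 Cj Cl ?s ?b ?t y
      (length (common_path C1 Cj)) (length (common_path C1 Cl)) (length (common_path Cj Cl))"
    by (rule backward_crossing.intro) (fact cycles long common_path_spec(3)[OF pj]
      common_path_spec(3)[OF pl] common_path_spec(3)[OF pjl] hd_common_path_in[OF pj]
      hd_common_path_in[OF pl] last_common_path_in[OF pjl] y(2) yl y_C1
      inter_iff_cyc_dist_from_hd(2)[OF pj] inter_iff_cyc_dist_from_hd[OF pl]
      inter_iff_cyc_dist_to_last[OF pjl] \<open>\<forall>z \<in> set Cj. z \<in> set Cl \<longrightarrow> _\<close>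
      \<open>3 * k < cyc_dist Cj y ?s\<close>)+
  from backward_crossing.has_B_subdivision[OF this] noB show False
    by contradiction
qed

lemma in_Qplus_if_in_other_Qplus:
  assumes noB: "\<not> has_B_subdivision V A k 1 k"
    and mj: "Cj \<in> meets \<C> C1" and ml: "Cl \<in> meets \<C> C1" and jl: "Cj \<noteq> Cl"
    and y: "y \<in> set (Qplus k C1 Cl)" "y \<in> set Cj"
  shows "y \<in> set (Qplus k C1 Cj)"
proof (rule ccontr)
  assume y_out: "y \<notin> set (Qplus k C1 Cj)"
  let ?a = "last (common_path C1 Cj)" and ?a' = "last (common_path C1 Cl)"
    and ?r = "hd (common_path Cj Cl)"
  note pj = suitable C1 meetsD[OF mj] and pl = suitable C1 meetsD[OF ml]
  have yl: "y \<in> set Cl" "cyc_dist Cl ?a' y \<le> 3 * k" and y_C1: "y \<notin> set C1"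
    using y(1) set_Qplus[OF ml] Qplus_inter_C1[OF ml] by auto
  then have pjl: "k_suitable V A k \<C>" "Cj \<in> \<C>" "Cl \<in> \<C>" "Cj \<noteq> Cl" "set Cj \<inter> set Cl \<noteq> {}"
    using suitable meetsD(1)[OF mj] meetsD(1)[OF ml] jl y(2) by blast+
  have cycles: "dcycle V A C1" "dcycle V A Cj" "dcycle V A Cl"
    and long: "8 * k \<le> length C1" "8 * k \<le> length Cj" "8 * k \<le> length Cl"
    using k_suitable_dcycle[OF suitable] C1 meetsD(1)[OF mj] meetsD(1)[OF ml] by blast+
  have "?a \<noteq> y"
    using y_C1 last_common_path_in(1)[OF pj] by auto
  then have "3 * k < cyc_dist Cj ?a y"
    using cyc_dist_eq_0_iff[OF k_suitable_dcycle(3)[OF pjl(1,2)] last_common_path_in(2)[OF pj] y(2)]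
      y_out y(2) set_Qplus[OF mj] by auto
  have "\<forall>z \<in> set Cj. z \<in> set Cl \<longrightarrow> cyc_dist Cj ?r z = cyc_dist Cl ?r z"
    using cyc_dist_common_path_agree(1)[OF pjl] by blast
  have "forward_crossing V A k C1 Cj Cl ?a ?a' ?r y
      (length (common_path C1 Cj)) (length (common_path C1 Cl)) (length (common_path Cj Cl))"
    by (rule forward_crossing.intro) (fact cycles long common_path_spec(3)[OF pj]
      common_path_spec(3)[OF pl] common_path_spec(3)[OF pjl] last_common_path_in[OF pj]
      last_common_path_in[OF pl] hd_common_path_in[OF pjl] y(2) yl y_C1
      inter_iff_cyc_dist_to_last(2)[OF pj] inter_iff_cyc_dist_to_last[OF pl]
      inter_iff_cyc_dist_from_hd[OF pjl] \<open>\<forall>z \<in> set Cj. z \<in> set Cl \<longrightarrow> _\<close>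
      \<open>3 * k < cyc_dist Cj ?a y\<close>)+
  from forward_crossing.has_B_subdivision[OF this] noB show False
    by contradiction
qed

lemma Iminus_verts_inter:
  assumes noB: "\<not> has_B_subdivision V A k 1 k" and mj: "Cj \<in> meets \<C> C1"
  shows "Iminus_verts k \<C> C1 \<inter> set Cj = set (Qminus k C1 Cj)"
proof
  show "Iminus_verts k \<C> C1 \<inter> set Cj \<subseteq> set (Qminus k C1 Cj)"
    using in_Qminus_if_in_other_Qminus[OF noB mj] unfolding Iminus_verts_def by blast
  show "set (Qminus k C1 Cj) \<subseteq> Iminus_verts k \<C> C1 \<inter> set Cj"
    using mj set_Qminus[OF mj] unfolding Iminus_verts_def by blast
qed

lemma Iplus_verts_inter:
  assumes noB: "\<not> has_B_subdivision V A k 1 k" and mj: "Cj \<in> meets \<C> C1"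
  shows "Iplus_verts k \<C> C1 \<inter> set Cj = set (Qplus k C1 Cj)"
proof
  show "Iplus_verts k \<C> C1 \<inter> set Cj \<subseteq> set (Qplus k C1 Cj)"
    using in_Qplus_if_in_other_Qplus[OF noB mj] unfolding Iplus_verts_def by blast
  show "set (Qplus k C1 Cj) \<subseteq> Iplus_verts k \<C> C1 \<inter> set Cj"
    using mj set_Qplus[OF mj] unfolding Iplus_verts_def by blast
qed

end

theorem mainTheorem13:
  fixes V :: "'a set" and A :: "('a \<times> 'a) set" and k :: nat
    and \<C> :: "'a list set" and C1 :: "'a list"
  assumes "digraph V A"
    and "k \<ge> 1"
    and "\<not> has_B_subdivision V A k 1 k"
    and "k_suitable V A k \<C>"
    and "C1 \<in> \<C>"
  shows "Iplus_verts k \<C> C1 \<inter> Iminus_verts k \<C> C1 = {} \<and>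
         (\<forall>Cj \<in> meets \<C> C1.
             Iminus_verts k \<C> C1 \<inter> set Cj = set (Qminus k C1 Cj) \<and>
             Iplus_verts k \<C> C1 \<inter> set Cj = set (Qplus k C1 Cj))"
proof -
  note Iminus = Iminus_verts_inter[OF assms(4,5,2,3)]
    and Iplus = Iplus_verts_inter[OF assms(4,5,2,3)]
  have "Iplus_verts k \<C> C1 \<inter> Iminus_verts k \<C> C1 = {}"
  proof (rule ccontr)
    assume "Iplus_verts k \<C> C1 \<inter> Iminus_verts k \<C> C1 \<noteq> {}"
    then obtain x Cj where Cj: "Cj \<in> meets \<C> C1" "x \<in> set (Qplus k C1 Cj)"
      and "x \<in> Iminus_verts k \<C> C1"
      unfolding Iplus_verts_def by blast
    moreover have "x \<in> set Cj"
      using Cj set_Qplus[OF assms(4,5,2)] by blast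
    ultimately have "x \<in> set (Qminus k C1 Cj)"
      using Iminus by blast
    then show False
      using Qplus_Qminus_disjoint[OF assms(4,5,2) Cj(1)] Cj(2) by blast
  qed
  then show ?thesis
    using Iminus Iplus by blast
qed

end
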